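(* Let $s\geq1$, let $q$ be a prime power and let $C^{(1)},\ldots,C^{(s)}\in\mathbb{F}_q^{\mathbb{N}\times\mathbb{N}_0}$ be finite-row generating matrices having optimal row-lengths and yielding, via Algorithm 1 (for some admissible choice of the bijections), a $(\mathbf{T},s)$-sequence in base $q$ with $\mathbf{T}\equiv 0$. Let $(s_n)_{n\geq0}$ be a sequence in $\mathbb{Z}_q$. Then, for any choice of bijections $\psi_r$, $\lambda_{i,j}$, the sequence produced by Algorithm 2 with these matrices and input $(s_n)_{n\ge0}$ is uniformly distributed in $[0,1]^s$ if and only if $(s_n)_{n\geq0}$ is uniformly distributed in $\mathbb{Z}_q$.
   Context: $\mathbb{F}_q$ is the finite field with $q$ elements, $D_q=\{0,\ldots,q-1\}$. $\mathbb{Z}_q$ is the ring of $q$-adic integers; each $z\in\mathbb{Z}_q$ has a unique representation $z=\sum_{r\ge0}a_rq^r$, $a_r\in D_q$ (the base-$q$ expansion for nonnegative integers), and $\tau_k(z)=\sum_{r<k}a_rq^r$. $(x_n)$ in $\mathbb{Z}_q$ is uniformly distributed in $\mathbb{Z}_q$ if for all $k\ge1$ and $0\le a<q^k$, $\frac1N\#\{n<N:\tau_k(x_n)\equiv a\bmod q^k\}\to q^{-k}$. A matrix $C^{(i)}=(c^{(i)}_{j,r})_{j\ge1,r\ge0}$ is finite-row if each row has finitely many nonzero entries. The length of row $j$ of $C^{(i)}$ is $\sup\{r:c^{(i)}_{j,r}\neq0\}+1$; the matrices have optimal row-lengths if for all $i\in\{1,\ldots,s\}$ and $j\ge1$ the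 length of row $j$ of $C^{(i)}$ is at most $sj$. Algorithm 2: choose bijections $\psi_r:D_q\to\mathbb{F}_q$ ($r\ge0$), finite-row matrices $C^{(i)}$, bijections $\lambda_{i,j}:\mathbb{F}_q\to D_q$, and $(s_n)$ in $\mathbb{Z}_q$; with $s_n=\sum_r a_rq^r$ put $x_n^{(i)}=\sum_{j\ge1}\lambda_{i,j}(\sum_r c^{(i)}_{j,r}\psi_r(a_r))q^{-j}$, $\boldsymbol{x}_n=(x_n^{(1)},\dots,x_n^{(s)})$. Algorithm 1 is the same with $s_n=n$ and $\psi_r(0)=0$ for all large $r$. The truncation $[x_n^{(i)}]_{q,m}$ is $\sum_{j=1}^m\lambda_{i,j}(\cdots)q^{-j}$ (truncation of this digit expansion), applied coordinatewise to vectors. An elementary interval in base $q$ is $\prod_{i=1}^s[a_iq^{-d_i},(a_i+1)q^{-d_i})$ with integers $d_i\ge0$, $0\le a_i<q^{d_i}$. For integers $0\le t\le m$, a $(t,m,s)$-net in base $q$ is a set of $q^m$ points in $[0,1)^s$ such that every elementary interval of volume $q^{t-m}$ contains exactly $q^t$ of them. For $\mathbf{T}:\mathbb{N}_0\to\mathbb{N}_0$ with $\mathbf{T}(m)\le m$, a sequence $(\boldsymbol{x}_n)$ in $[0,1]^s$ is a $(\mathbf{T},s)$-sequence in base $q$ if for all $k\ge0$ and all $m$ with $\mathbf{T}(m)<m$ the points $[\boldsymbol{x}_n]_{q,m}$, $kq^m\le n<(k+1)q^m$, form a $(\mathbf{T}(m),m,s)$-net in base $q$. A sequence in $[0,1]^s$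 is uniformly distributed if the star discrepancy $\sup_J|A(J)/N-\mathrm{vol}(J)|$ of its first $N$ terms (sup over subintervals $J\subseteq[0,1]^s$ with a vertex at the origin, $A(J)=\#\{n<N:\boldsymbol{x}_n\in J\}$) tends to $0$. *)

theory Defs
  imports "HOL-Analysis.Analysis"
begin

text \<open>q-adic integers are represented by their (unique) digit sequences
  a :: nat \<Rightarrow> nat with a r < q for all r.\<close>

definition qdigits :: "nat \<Rightarrow> nat \<Rightarrow> nat \<Rightarrow> nat" where
  "qdigits q n r = (n div q ^ r) mod q"

definition qadic_trunc :: "nat \<Rightarrow> nat \<Rightarrow> (nat \<Rightarrow> nat) \<Rightarrow> nat" where
  "qadic_trunc q k a = (\<Sum>r<k. a r * q ^ r)"

definition qadic_ud :: "nat \<Rightarrow> (nat \<Rightarrow> nat \<Rightarrow> nat) \<Rightarrow> bool" where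
  "qadic_ud q x \<longleftrightarrow> (\<forall>k\<ge>1. \<forall>a<q ^ k.
     (\<lambda>N. real (card {n. n < N \<and> qadic_trunc q k (x n) mod q ^ k = a mod q ^ k}) / real N)
       \<longlonglongrightarrow> 1 / real q ^ k)"

text \<open>Generating matrices: C i j r = c^{(i)}_{j,r}, i \<in> {1..s}, j \<ge> 1, r \<ge> 0.\<close>

definition finite_row :: "nat \<Rightarrow> (nat \<Rightarrow> nat \<Rightarrow> nat \<Rightarrow> 'a::zero) \<Rightarrow> bool" where
  "finite_row s C \<longleftrightarrow> (\<forall>i\<in>{1..s}. \<forall>j\<ge>1. finite {r. C i j r \<noteq> 0})"

definition optimal_row_lengths :: "nat \<Rightarrow> (nat \<Rightarrow> nat \<Rightarrow> nat \<Rightarrow> 'a::zero) \<Rightarrow> bool" where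
  "optimal_row_lengths s C \<longleftrightarrow>
     (\<forall>i\<in>{1..s}. \<forall>j\<ge>1. \<forall>r. C i j r \<noteq> 0 \<longrightarrow> r + 1 \<le> s * j)"

definition alg_digit ::
  "(nat \<Rightarrow> nat \<Rightarrow> nat \<Rightarrow> 'a::field) \<Rightarrow> (nat \<Rightarrow> nat \<Rightarrow> 'a) \<Rightarrow> (nat \<Rightarrow> nat \<Rightarrow> 'a \<Rightarrow> nat)
     \<Rightarrow> (nat \<Rightarrow> nat) \<Rightarrow> nat \<Rightarrow> nat \<Rightarrow> nat" where
  "alg_digit C \<psi> lam a i j = lam i j (\<Sum>r\<in>{r. C i j r \<noteq> 0}. C i j r * \<psi> r (a r))"

definition alg_point ::
  "nat \<Rightarrow> (nat \<Rightarrow> nat \<Rightarrow> nat \<Rightarrow> 'a::field) \<Rightarrow> (nat \<Rightarrow> nat \<Rightarrow> 'a) \<Rightarrow> (nat \<Rightarrow> nat \<Rightarrow> 'a \<Rightarrow> nat)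
     \<Rightarrow> (nat \<Rightarrow> nat) \<Rightarrow> nat \<Rightarrow> real" where
  "alg_point q C \<psi> lam a i = (\<Sum>j. real (alg_digit C \<psi> lam a i (Suc j)) / real q ^ Suc j)"

definition alg_trunc ::
  "nat \<Rightarrow> (nat \<Rightarrow> nat \<Rightarrow> nat \<Rightarrow> 'a::field) \<Rightarrow> (nat \<Rightarrow> nat \<Rightarrow> 'a) \<Rightarrow> (nat \<Rightarrow> nat \<Rightarrow> 'a \<Rightarrow> nat)
     \<Rightarrow> nat \<Rightarrow> (nat \<Rightarrow> nat) \<Rightarrow> nat \<Rightarrow> real" where
  "alg_trunc q C \<psi> lam m a i = (\<Sum>j\<in>{1..m}. real (alg_digit C \<psi> lam a i j) / real q ^ j)"

definition psi_bij :: "nat \<Rightarrow> (nat \<Rightarrow> nat \<Rightarrow> 'a) \<Rightarrow> bool" where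
  "psi_bij q \<psi> \<longleftrightarrow> (\<forall>r. bij_betw (\<psi> r) {..<q} UNIV)"

definition lambda_bij :: "nat \<Rightarrow> nat \<Rightarrow> (nat \<Rightarrow> nat \<Rightarrow> 'a \<Rightarrow> nat) \<Rightarrow> bool" where
  "lambda_bij q s lam \<longleftrightarrow> (\<forall>i\<in>{1..s}. \<forall>j\<ge>1. bij_betw (lam i j) UNIV {..<q})"

definition in_elem_interval ::
  "nat \<Rightarrow> nat \<Rightarrow> (nat \<Rightarrow> nat) \<Rightarrow> (nat \<Rightarrow> nat) \<Rightarrow> (nat \<Rightarrow> real) \<Rightarrow> bool" where
  "in_elem_interval q s d a x \<longleftrightarrow>
     (\<forall>i\<in>{1..s}. real (a i) / real q ^ d i \<le> x i \<and> x i < real (a i + 1) / real q ^ d i)"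

definition is_tms_net :: "nat \<Rightarrow> nat \<Rightarrow> nat \<Rightarrow> nat \<Rightarrow> (nat \<Rightarrow> nat \<Rightarrow> real) \<Rightarrow> bool" where
  "is_tms_net q t m s P \<longleftrightarrow> t \<le> m \<and>
     (\<forall>n<q ^ m. \<forall>i\<in>{1..s}. 0 \<le> P n i \<and> P n i < 1) \<and>
     (\<forall>d a. (\<Sum>i\<in>{1..s}. d i) = m - t \<longrightarrow> (\<forall>i\<in>{1..s}. a i < q ^ d i) \<longrightarrow>
        card {n. n < q ^ m \<and> in_elem_interval q s d a (P n)} = q ^ t)"

text \<open>(T,s)-sequence in base q; tr m n is the truncation [x_n]_{q,m}.\<close>
definition is_Ts_sequence ::
  "nat \<Rightarrow> (nat \<Rightarrow> nat) \<Rightarrow> nat \<Rightarrow> (nat \<Rightarrow> nat \<Rightarrow> real) \<Rightarrow> (nat \<Rightarrow> nat \<Rightarrow> nat \<Rightarrow> real) \<Rightarrow> bool" where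
  "is_Ts_sequence q T s x tr \<longleftrightarrow>
     (\<forall>m. T m \<le> m) \<and> (\<forall>n. \<forall>i\<in>{1..s}. 0 \<le> x n i \<and> x n i \<le> 1) \<and>
     (\<forall>k m. T m < m \<longrightarrow> is_tms_net q (T m) m s (\<lambda>n. tr m (k * q ^ m + n)))"

definition star_discrepancy :: "nat \<Rightarrow> (nat \<Rightarrow> nat \<Rightarrow> real) \<Rightarrow> nat \<Rightarrow> real" where
  "star_discrepancy s x N = (SUP b\<in>{b. \<forall>i\<in>{1..s}. 0 \<le> b i \<and> b i \<le> 1}.
     \<bar>real (card {n. n < N \<and> (\<forall>i\<in>{1..s}. x n i < b i)}) / real N - (\<Prod>i\<in>{1..s}. b i)\<bar>)"

definition unif_distr :: "nat \<Rightarrow> (nat \<Rightarrow> nat \<Rightarrow> real) \<Rightarrow> bool" where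
  "unif_distr s x \<longleftrightarrow> (\<lambda>N. star_discrepancy s x N) \<longlonglongrightarrow> 0"

end

theory Submission
  imports Defs
begin

text \<open>
  At level \<open>k\<close> every coordinate of \<open>x\<^sub>n\<close> lies in the closed interval of length \<open>q\<^sup>-\<^sup>k\<close> given
  by its first \<open>k\<close> digits, so \<open>x\<^sub>n\<close> lies in a cube of side \<open>q\<^sup>-\<^sup>k\<close>, its cell; by optimal row-lengths
  the cell depends only on the first \<open>s k\<close> digits of \<open>s\<^sub>n\<close>. As Algorithm 1 produces
  \<open>(0, s k, s)\<close>-nets, the cell map is onto and hence bijective between the \<open>q\<^sup>s\<^sup>k\<close> digit vectors
  and the \<open>q\<^sup>s\<^sup>k\<close> cells. Whether two digit vectors share a cell only depends on the linear
  forms of the matrices over \<open>\<bbbF>\<^sub>q\<close>, so bijectivity holds for all choices of the \<open>\<psi>\<^sub>r\<close> and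
  \<open>\<lambda>\<^sub>i\<^sub>,\<^sub>j\<close>, and the cells of \<open>x\<^sub>n\<close> are equidistributed exactly when the truncations
  \<open>\<tau>\<^sub>s\<^sub>k(s\<^sub>n)\<close> are.

  It remains to see that uniform distribution in \<open>[0,1]\<^sup>s\<close> amounts to equidistribution of
  the cells at every level (an anchored box is squeezed between unions of cells, and a cell
  contains a slightly smaller box of almost the same volume), and that uniform distribution
  in \<open>\<int>\<^sub>q\<close> only needs the levels \<open>s k\<close>, since coarser truncations arise by reduction
  modulo \<open>q\<^sup>K\<close>, all of whose fibres have the same size.
\<close>

lemma qadic_trunc_Suc: "qadic_trunc q (Suc m) a = a 0 + q * qadic_trunc q m (\<lambda>r. a (Suc r))"
  unfolding qadic_trunc_def by (subst sum.lessThan_Suc_shift) (simp add: sum_distrib_left mult_ac)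

lemma qadic_trunc_cong: "(\<And>r. r < m \<Longrightarrow> a r = b r) \<Longrightarrow> qadic_trunc q m a = qadic_trunc q m b"
  unfolding qadic_trunc_def by (intro sum.cong) auto

lemma qadic_trunc_less:
  assumes "0 < q" and "\<And>r. r < m \<Longrightarrow> a r < q"
  shows "qadic_trunc q m a < q ^ m"
  using assms(2)
proof (induction m arbitrary: a)
  case 0
  then show ?case by (simp add: qadic_trunc_def)
next
  case (Suc m)
  let ?t = "qadic_trunc q m (\<lambda>r. a (Suc r))"
  have "?t < q ^ m" using Suc.IH[of "\<lambda>r. a (Suc r)"] Suc.prems by simp
  have "a 0 + q * ?t < q * (?t + 1)" using Suc.prems by simp
  also have "\<dots> \<le> q * q ^ m" using \<open>?t < q ^ m\<close> by (intro mult_le_mono2) simp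
  finally show ?case by (simp add: qadic_trunc_Suc)
qed

lemma qadic_trunc_digit:
  assumes "0 < q" and "\<And>r. r < m \<Longrightarrow> a r < q" and "t < m"
  shows "qadic_trunc q m a div q ^ t mod q = a t"
  using assms(2,3)
proof (induction m arbitrary: a t)
  case 0
  then show ?case by simp
next
  case (Suc m)
  have div_q: "qadic_trunc q (Suc m) a div q = qadic_trunc q m (\<lambda>r. a (Suc r))"
    using assms(1) Suc.prems by (simp add: qadic_trunc_Suc)
  show ?case
  proof (cases t)
    case 0
    then show ?thesis using Suc.prems by (simp add: qadic_trunc_Suc)
  next
    case (Suc t')
    have "qadic_trunc q (Suc m) a div q ^ t = qadic_trunc q m (\<lambda>r. a (Suc r)) div q ^ t'"
      using Suc div_q by (simp add: div_mult2_eq)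
    then show ?thesis using Suc.IH[of "\<lambda>r. a (Suc r)" t'] Suc.prems Suc by simp
  qed
qed

lemma bij_betw_qadic_trunc:
  assumes "0 < q"
  shows "bij_betw (qadic_trunc q m) (PiE {..<m} (\<lambda>_. {..<q})) {..<q ^ m}"
proof -
  let ?A = "PiE {..<m} (\<lambda>_. {..<q})"
  have "inj_on (qadic_trunc q m) ?A"
  proof (rule inj_onI)
    fix a b assume a: "a \<in> ?A" and b: "b \<in> ?A" and eq: "qadic_trunc q m a = qadic_trunc q m b"
    show "a = b"
    proof (rule PiE_ext[OF a b])
      fix t assume "t \<in> {..<m}"
      then show "a t = b t"
        using qadic_trunc_digit[OF assms, of m a t] qadic_trunc_digit[OF assms, of m b t] a b eq
        by (auto simp: PiE_iff)
    qed
  qed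
  moreover have "qadic_trunc q m ` ?A \<subseteq> {..<q ^ m}"
    using qadic_trunc_less[OF assms] by (auto simp: PiE_iff)
  moreover have "card ?A = card {..<q ^ m}" by (simp add: card_PiE)
  ultimately show ?thesis
    unfolding bij_betw_def by (metis card_image card_subset_eq finite_lessThan)
qed

lemma qadic_trunc_mod:
  assumes "0 < q" and "K \<le> m" and "\<And>r. r < m \<Longrightarrow> a r < q"
  shows "qadic_trunc q m a mod q ^ K = qadic_trunc q K a"
proof -
  have "qadic_trunc q m a = qadic_trunc q K a + q ^ K * (\<Sum>r\<in>{K..<m}. a r * q ^ (r - K))"
  proof -
    have "qadic_trunc q m a = qadic_trunc q K a + (\<Sum>r\<in>{K..<m}. a r * q ^ r)"
      unfolding qadic_trunc_def using assms(2)
      by (simp add: atLeast0LessThan[symmetric] sum.atLeastLessThan_concat)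
    also have "(\<Sum>r\<in>{K..<m}. a r * q ^ r) = q ^ K * (\<Sum>r\<in>{K..<m}. a r * q ^ (r - K))"
      unfolding sum_distrib_left by (intro sum.cong refl) (simp add: power_add[symmetric] mult_ac)
    finally show ?thesis .
  qed
  moreover have "qadic_trunc q K a < q ^ K" using assms by (intro qadic_trunc_less) auto
  ultimately show ?thesis by simp
qed

lemma card_residue_class_below_power:
  assumes "0 < q" and "K \<le> m" and "a < q ^ K"
  shows "card {c \<in> {..<q ^ m}. c mod q ^ K = a} = q ^ (m - K)"
proof -
  have qm: "q ^ m = q ^ K * q ^ (m - K)" using assms(2) by (simp flip: power_add)
  have "{c \<in> {..<q ^ m}. c mod q ^ K = a} = (\<lambda>t. a + q ^ K * t) ` {..<q ^ (m - K)}"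
  proof (intro set_eqI iffI)
    fix c assume c: "c \<in> {c \<in> {..<q ^ m}. c mod q ^ K = a}"
    then have "c = a + q ^ K * (c div q ^ K)" using mod_mult_div_eq[of c "q ^ K"] by simp
    moreover have "c div q ^ K < q ^ (m - K)"
      using c qm by (simp add: less_mult_imp_div_less mult.commute)
    ultimately show "c \<in> (\<lambda>t. a + q ^ K * t) ` {..<q ^ (m - K)}" by blast
  next
    fix c assume "c \<in> (\<lambda>t. a + q ^ K * t) ` {..<q ^ (m - K)}"
    then obtain t where t: "t < q ^ (m - K)" and c: "c = a + q ^ K * t" by auto
    have "c < q ^ K * (t + 1)" using c assms(3) by simp
    also have "\<dots> \<le> q ^ m" using t qm by (metis Suc_eq_plus1 Suc_leI mult_le_mono2)
    finally show "c \<in> {c \<in> {..<q ^ m}. c mod q ^ K = a}" using c assms(3) by simp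
  qed
  moreover have "inj_on (\<lambda>t. a + q ^ K * t) {..<q ^ (m - K)}" using assms(1) by (intro inj_onI) simp
  ultimately show ?thesis by (simp add: card_image)
qed

definition rel_freq :: "(nat \<Rightarrow> bool) \<Rightarrow> nat \<Rightarrow> real" where
  "rel_freq P N = real (card {n. n < N \<and> P n}) / real N"

definition equidistributed_on :: "(nat \<Rightarrow> 'b) \<Rightarrow> 'b set \<Rightarrow> bool" where
  "equidistributed_on f V \<longleftrightarrow> (\<forall>v\<in>V. rel_freq (\<lambda>n. f n = v) \<longlonglongrightarrow> 1 / real (card V))"

lemma rel_freq_nonneg: "0 \<le> rel_freq P N"
  by (simp add: rel_freq_def)

lemma rel_freq_le_one: "rel_freq P N \<le> 1"
proof -
  have "card {n. n < N \<and> P n} \<le> card {..<N}" by (intro card_mono) auto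
  then show ?thesis by (cases "N = 0") (simp_all add: rel_freq_def)
qed

lemma rel_freq_mono: "(\<And>n. P n \<Longrightarrow> Q n) \<Longrightarrow> rel_freq P N \<le> rel_freq Q N"
  unfolding rel_freq_def
  by (intro divide_right_mono of_nat_mono card_mono) (auto intro: finite_subset[of _ "{..<N}"])

lemma rel_freq_fibres:
  assumes "finite S"
  shows "rel_freq (\<lambda>n. f n \<in> S) N = (\<Sum>v\<in>S. rel_freq (\<lambda>n. f n = v) N)"
proof -
  have "{n. n < N \<and> f n \<in> S} = (\<Union>v\<in>S. {n. n < N \<and> f n = v})" by auto
  moreover have "card (\<Union>v\<in>S. {n. n < N \<and> f n = v}) = (\<Sum>v\<in>S. card {n. n < N \<and> f n = v})"
    using assms by (intro card_UN_disjoint) auto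
  ultimately show ?thesis by (simp add: rel_freq_def sum_divide_distrib)
qed

lemma sum_rel_freq_eq_one:
  assumes "finite V" and "\<And>n. f n \<in> V" and "0 < N"
  shows "(\<Sum>v\<in>V. rel_freq (\<lambda>n. f n = v) N) = 1"
  using rel_freq_fibres[OF assms(1), of f N] assms(2,3) by (simp add: rel_freq_def)

lemma equidistributed_on_bij_betw:
  assumes G: "bij_betw G V W" and f: "\<And>n. f n \<in> V" and g: "\<And>n. g n = G (f n)"
  shows "equidistributed_on g W \<longleftrightarrow> equidistributed_on f V"
proof -
  have "rel_freq (\<lambda>n. g n = G v) = rel_freq (\<lambda>n. f n = v)" if "v \<in> V" for v
    using bij_betw_imp_inj_on[OF G] f g that by (simp add: inj_on_eq_iff)
  moreover have "card W = card V" using bij_betw_same_card[OF G] by simp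
  ultimately show ?thesis
    unfolding equidistributed_on_def using bij_betw_imp_surj_on[OF G] by auto
qed

lemma equidistributed_on_image:
  assumes fin: "finite V" and f: "\<And>n. f n \<in> V" and eq: "equidistributed_on f V"
    and fibres: "\<And>w. w \<in> W \<Longrightarrow> card {v \<in> V. h v = w} * card W = card V"
  shows "equidistributed_on (\<lambda>n. h (f n)) W"
  unfolding equidistributed_on_def
proof
  fix w assume w: "w \<in> W"
  let ?F = "{v \<in> V. h v = w}"
  have V: "card V \<noteq> 0" using f[of 0] fin by auto
  then have W: "card W \<noteq> 0" using fibres[OF w] by (metis mult_0_right)
  have "rel_freq (\<lambda>n. h (f n) = w) = (\<lambda>N. \<Sum>v\<in>?F. rel_freq (\<lambda>n. f n = v) N)"
    using f by (simp add: rel_freq_fibres[symmetric] fin)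
  moreover have "(\<lambda>N. \<Sum>v\<in>?F. rel_freq (\<lambda>n. f n = v) N) \<longlonglongrightarrow> (\<Sum>v\<in>?F. 1 / real (card V))"
    using eq unfolding equidistributed_on_def by (intro tendsto_sum) auto
  moreover have "(\<Sum>v\<in>?F. 1 / real (card V)) = 1 / real (card W)"
    using fibres[OF w] V W by (simp add: divide_simps flip: of_nat_mult)
  ultimately show "rel_freq (\<lambda>n. h (f n) = w) \<longlonglongrightarrow> 1 / real (card W)" by simp
qed

lemma equidistributed_on_eventually_close:
  assumes "finite V" and "equidistributed_on f V" and "0 < \<delta>"
  shows "eventually (\<lambda>N. \<forall>v\<in>V. \<bar>rel_freq (\<lambda>n. f n = v) N - 1 / real (card V)\<bar> < \<delta>) sequentially"
proof (rule eventually_ball_finite[OF assms(1)], rule ballI)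
  fix v assume "v \<in> V"
  then have "rel_freq (\<lambda>n. f n = v) \<longlonglongrightarrow> 1 / real (card V)"
    using assms(2) unfolding equidistributed_on_def by blast
  from tendstoD[OF this \<open>0 < \<delta>\<close>]
  show "eventually (\<lambda>N. \<bar>rel_freq (\<lambda>n. f n = v) N - 1 / real (card V)\<bar> < \<delta>) sequentially"
    by (simp add: dist_real_def)
qed

lemma abs_diff_mean_le_if_lower_bounds:
  fixes p :: "'b \<Rightarrow> real"
  assumes fin: "finite V" and v0: "v0 \<in> V" and sum: "(\<Sum>v\<in>V. p v) = 1" and "0 \<le> \<eta>"
    and lower: "\<And>v. v \<in> V \<Longrightarrow> 1 / real (card V) - \<eta> \<le> p v"
  shows "\<bar>p v0 - 1 / real (card V)\<bar> \<le> real (card V) * \<eta>"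
proof -
  let ?M = "real (card V)" and ?m = "1 / real (card V)"
  have "card V \<noteq> 0" using fin v0 by auto
  then have M: "1 \<le> ?M" by simp
  have "(?M - 1) * (?m - \<eta>) = (\<Sum>v\<in>V - {v0}. ?m - \<eta>)"
    using fin v0 M by (simp add: card_Diff_singleton of_nat_diff)
  also have "\<dots> \<le> (\<Sum>v\<in>V - {v0}. p v)" using lower by (intro sum_mono) auto
  also have "\<dots> = 1 - p v0" using sum sum.remove[OF fin v0, of p] by simp
  finally have "(?M - 1) * (?m - \<eta>) \<le> 1 - p v0" .
  moreover have "(?M - 1) * (?m - \<eta>) = 1 - ?m - ?M * \<eta> + \<eta>"
    using M by (simp add: left_diff_distrib right_diff_distrib diff_divide_distrib)
  moreover have "\<eta> \<le> ?M * \<eta>" using M \<open>0 \<le> \<eta>\<close> by (simp add: mult_le_cancel_right1)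
  ultimately show ?thesis using lower[OF v0] \<open>0 \<le> \<eta>\<close> unfolding abs_le_iff by linarith
qed

lemma equidistributed_on_if_lower_bounds:
  assumes fin: "finite V" and f: "\<And>n. f n \<in> V"
    and lower: "\<And>v \<eta>. v \<in> V \<Longrightarrow> 0 < \<eta> \<Longrightarrow>
      eventually (\<lambda>N. 1 / real (card V) - \<eta> \<le> rel_freq (\<lambda>n. f n = v) N) sequentially"
  shows "equidistributed_on f V"
  unfolding equidistributed_on_def
proof (intro ballI tendstoI)
  fix v0 and \<epsilon> :: real assume v0: "v0 \<in> V" and \<epsilon>: "0 < \<epsilon>"
  let ?M = "real (card V)"
  have M: "0 < ?M" using fin v0 card_gt_0_iff by auto
  define \<eta> where "\<eta> = \<epsilon> / (2 * ?M)"
  have \<eta>: "0 < \<eta>" "?M * \<eta> < \<epsilon>" using \<epsilon> M by (simp_all add: \<eta>_def)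
  have "eventually (\<lambda>N. (\<forall>v\<in>V. 1 / ?M - \<eta> \<le> rel_freq (\<lambda>n. f n = v) N) \<and> 0 < N) sequentially"
    using lower[OF _ \<eta>(1)] fin
    by (intro eventually_conj eventually_ball_finite eventually_gt_at_top) auto
  then show "eventually (\<lambda>N. dist (rel_freq (\<lambda>n. f n = v0) N) (1 / ?M) < \<epsilon>) sequentially"
  proof (rule eventually_mono, elim conjE)
    fix N :: nat assume "\<forall>v\<in>V. 1 / ?M - \<eta> \<le> rel_freq (\<lambda>n. f n = v) N" and "0 < N"
    then have "\<bar>rel_freq (\<lambda>n. f n = v0) N - 1 / ?M\<bar> \<le> ?M * \<eta>"
      using \<eta>(1) sum_rel_freq_eq_one[of V f, OF fin f]
      by (intro abs_diff_mean_le_if_lower_bounds[OF fin v0]) auto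
    then show "dist (rel_freq (\<lambda>n. f n = v0) N) (1 / ?M) < \<epsilon>" using \<eta>(2) by (simp add: dist_real_def)
  qed
qed

subsection \<open>Uniform distribution in the q-adic integers\<close>

lemma qadic_ud_iff_equidistributed_truncations:
  assumes q: "0 < q" and s: "1 \<le> s" and digits: "\<And>n r. sq n r < q"
  shows "qadic_ud q sq \<longleftrightarrow>
    (\<forall>k\<ge>1. equidistributed_on (\<lambda>n. qadic_trunc q (s * k) (sq n)) {..<q ^ (s * k)})"
proof -
  have trunc_less: "qadic_trunc q m (sq n) < q ^ m" for m n
    using q digits by (rule qadic_trunc_less)
  have ud_iff: "qadic_ud q sq \<longleftrightarrow>
    (\<forall>k\<ge>1. equidistributed_on (\<lambda>n. qadic_trunc q k (sq n)) {..<q ^ k})"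
    unfolding qadic_ud_def equidistributed_on_def rel_freq_def
    using trunc_less by (simp add: of_nat_power Ball_def)
  show ?thesis
    unfolding ud_iff
  proof (intro iffI allI impI)
    fix k :: nat assume "\<forall>k\<ge>1. equidistributed_on (\<lambda>n. qadic_trunc q k (sq n)) {..<q ^ k}" "1 \<le> k"
    then show "equidistributed_on (\<lambda>n. qadic_trunc q (s * k) (sq n)) {..<q ^ (s * k)}"
      using s by (simp add: Suc_le_eq)
  next
    fix K :: nat
    assume levels: "\<forall>k\<ge>1. equidistributed_on (\<lambda>n. qadic_trunc q (s * k) (sq n)) {..<q ^ (s * k)}"
      and K: "1 \<le> K"
    have "K \<le> s * K" using s by simp
    have "equidistributed_on (\<lambda>n. qadic_trunc q (s * K) (sq n) mod q ^ K) {..<q ^ K}"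
    proof (rule equidistributed_on_image[where h = "\<lambda>c. c mod q ^ K"])
      show "equidistributed_on (\<lambda>n. qadic_trunc q (s * K) (sq n)) {..<q ^ (s * K)}"
        using levels K by blast
      show "card {c \<in> {..<q ^ (s * K)}. c mod q ^ K = a} * card {..<q ^ K} = card {..<q ^ (s * K)}"
        if "a \<in> {..<q ^ K}" for a
        using card_residue_class_below_power[OF q \<open>K \<le> s * K\<close>, of a] that \<open>K \<le> s * K\<close>
        by (simp flip: power_add)
    qed (use trunc_less in auto)
    then show "equidistributed_on (\<lambda>n. qadic_trunc q K (sq n)) {..<q ^ K}"
      using qadic_trunc_mod[OF q \<open>K \<le> s * K\<close> digits] by simp
  qed
qed

definition cell_index :: "nat \<Rightarrow> nat \<Rightarrow> (nat \<Rightarrow> nat) \<Rightarrow> nat" where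
  "cell_index q k d = (\<Sum>j\<in>{1..k}. d j * q ^ (k - j))"

lemma cell_index_eq_qadic_trunc: "cell_index q k d = qadic_trunc q k (\<lambda>r. d (k - r))"
  unfolding cell_index_def qadic_trunc_def
  by (rule sum.reindex_bij_witness[of _ "\<lambda>r. k - r" "\<lambda>j. k - j"]) auto

lemma cell_index_cong: "(\<And>j. j \<in> {1..k} \<Longrightarrow> d j = d' j) \<Longrightarrow> cell_index q k d = cell_index q k d'"
  unfolding cell_index_def by (intro sum.cong) auto

lemma cell_index_less:
  assumes "0 < q" and "\<And>j. j \<in> {1..k} \<Longrightarrow> d j < q"
  shows "cell_index q k d < q ^ k"
proof -
  have "d (k - r) < q" if "r < k" for r using assms(2) that by simp
  then show ?thesis unfolding cell_index_eq_qadic_trunc by (rule qadic_trunc_less[OF assms(1)])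
qed

lemma cell_index_inj:
  assumes q: "0 < q" and d: "\<And>j. j \<in> {1..k} \<Longrightarrow> d j < q" and d': "\<And>j. j \<in> {1..k} \<Longrightarrow> d' j < q"
    and eq: "cell_index q k d = cell_index q k d'" and j: "j \<in> {1..k}"
  shows "d j = d' j"
proof -
  have "d j = qadic_trunc q k (\<lambda>r. d (k - r)) div q ^ (k - j) mod q"
    using qadic_trunc_digit[OF q, of k "\<lambda>r. d (k - r)" "k - j"] d j by auto
  also have "\<dots> = qadic_trunc q k (\<lambda>r. d' (k - r)) div q ^ (k - j) mod q"
    using eq by (simp add: cell_index_eq_qadic_trunc)
  also have "\<dots> = d' j"
    using qadic_trunc_digit[OF q, of k "\<lambda>r. d' (k - r)" "k - j"] d' j by auto
  finally show ?thesis .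
qed

lemma real_cell_index_div:
  assumes "0 < q"
  shows "real (cell_index q k d) / real q ^ k = (\<Sum>j\<in>{1..k}. real (d j) / real q ^ j)"
  unfolding cell_index_def of_nat_sum sum_divide_distrib
proof (intro sum.cong refl)
  fix j assume "j \<in> {1..k}"
  then have "real q ^ k = real q ^ j * real q ^ (k - j)" by (simp flip: power_add)
  then show "real (d j * q ^ (k - j)) / real q ^ k = real (d j) / real q ^ j"
    using assms by simp
qed

lemma digit_tail_sum_le:
  assumes q: "0 < q" and d: "\<And>j. d j < q" and "k \<le> M"
  shows "(\<Sum>j\<in>{k<..M}. real (d j) / real q ^ j) \<le> 1 / real q ^ k - 1 / real q ^ M"
  using \<open>k \<le> M\<close>
proof (induction M rule: dec_induct)
  case base
  then show ?case by simp
next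
  case (step n)
  have "real (d (Suc n)) \<le> real q - 1" using d[of "Suc n"] by linarith
  then have "real (d (Suc n)) / real q ^ Suc n \<le> (real q - 1) / real q ^ Suc n"
    by (intro divide_right_mono) auto
  also have "\<dots> = 1 / real q ^ n - 1 / real q ^ Suc n" using q by (simp add: field_simps)
  moreover have "{k<..Suc n} = insert (Suc n) {k<..n}" using step by auto
  ultimately show ?case using step by simp
qed

lemma digit_sum_cell_bounds:
  assumes q: "0 < q" and d: "\<And>j. d j < q" and "k \<le> M"
  shows "real (cell_index q k d) / real q ^ k \<le> (\<Sum>j\<in>{1..M}. real (d j) / real q ^ j)"
    and "(\<Sum>j\<in>{1..M}. real (d j) / real q ^ j) < (real (cell_index q k d) + 1) / real q ^ k"
proof -
  let ?tail = "\<Sum>j\<in>{k<..M}. real (d j) / real q ^ j"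
  have "{1..M} = {1..k} \<union> {k<..M}" and "{1..k} \<inter> {k<..M} = {}" using \<open>k \<le> M\<close> by auto
  then have "(\<Sum>j\<in>{1..M}. real (d j) / real q ^ j) = (\<Sum>j\<in>{1..k}. real (d j) / real q ^ j) + ?tail"
    by (simp add: sum.union_disjoint)
  then have split: "(\<Sum>j\<in>{1..M}. real (d j) / real q ^ j) = real (cell_index q k d) / real q ^ k + ?tail"
    by (simp only: real_cell_index_div[OF q])
  have "0 \<le> ?tail" by (intro sum_nonneg) auto
  moreover have "?tail < 1 / real q ^ k"
  proof -
    have "0 < 1 / real q ^ M" using q by simp
    then show ?thesis using digit_tail_sum_le[of q d, OF q d \<open>k \<le> M\<close>] by linarith
  qed
  moreover have "(real (cell_index q k d) + 1) / real q ^ k =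
      real (cell_index q k d) / real q ^ k + 1 / real q ^ k"
    by (rule add_divide_distrib)
  ultimately show "real (cell_index q k d) / real q ^ k \<le> (\<Sum>j\<in>{1..M}. real (d j) / real q ^ j)"
    and "(\<Sum>j\<in>{1..M}. real (d j) / real q ^ j) < (real (cell_index q k d) + 1) / real q ^ k"
    unfolding split by linarith+
qed

lemma digit_series_cell_bounds:
  assumes q: "0 < q" and d: "\<And>j. d j < q"
  shows "real (cell_index q k d) / real q ^ k \<le> (\<Sum>j. real (d (Suc j)) / real q ^ Suc j)"
    and "(\<Sum>j. real (d (Suc j)) / real q ^ Suc j) \<le> (real (cell_index q k d) + 1) / real q ^ k"
proof -
  let ?f = "\<lambda>j. real (d (Suc j)) / real q ^ Suc j"
  have partial: "(\<Sum>j<M. ?f j) = (\<Sum>j\<in>{1..M}. real (d j) / real q ^ j)" for M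
    by (rule sum.reindex_bij_witness[of _ "\<lambda>j. j - 1" Suc]) auto
  have "(\<Sum>j<M. ?f j) \<le> 1" for M
    using digit_sum_cell_bounds(2)[of q d 0 M, OF q d] unfolding partial by (simp add: cell_index_def)
  then have "summable ?f" by (intro summableI_nonneg_bounded[where x = 1]) auto
  then have lim: "(\<lambda>M. \<Sum>j<M. ?f j) \<longlonglongrightarrow> suminf ?f" by (rule summable_LIMSEQ)
  have "\<forall>M\<ge>k. real (cell_index q k d) / real q ^ k \<le> (\<Sum>j<M. ?f j)"
    using digit_sum_cell_bounds(1)[of q d k, OF q d] unfolding partial by simp
  then show "real (cell_index q k d) / real q ^ k \<le> suminf ?f"
    by (intro LIMSEQ_le_const[OF lim]) blast
  have "\<forall>M\<ge>k. (\<Sum>j<M. ?f j) \<le> (real (cell_index q k d) + 1) / real q ^ k"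
    using digit_sum_cell_bounds(2)[of q d k, OF q d] unfolding partial by (simp add: less_imp_le)
  then show "suminf ?f \<le> (real (cell_index q k d) + 1) / real q ^ k"
    by (intro LIMSEQ_le_const2[OF lim]) blast
qed

lemma grid_interval_unique:
  fixes t Q :: real
  assumes "0 < Q" and "real a / Q \<le> t" "t < (real a + 1) / Q" and "real c / Q \<le> t" "t < (real c + 1) / Q"
  shows "a = c"
proof -
  have "real a / Q < (real c + 1) / Q" and "real c / Q < (real a + 1) / Q"
    using assms by linarith+
  then have "real a < real c + 1" and "real c < real a + 1"
    using \<open>0 < Q\<close> by (simp_all add: divide_less_cancel)
  then show ?thesis by linarith
qed

subsection \<open>Cells of the points generated by the matrices\<close>

definition alg_cell ::
  "nat \<Rightarrow> nat \<Rightarrow> nat \<Rightarrow> (nat \<Rightarrow> nat \<Rightarrow> nat \<Rightarrow> 'a::field) \<Rightarrow> (nat \<Rightarrow> nat \<Rightarrow> 'a)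
     \<Rightarrow> (nat \<Rightarrow> nat \<Rightarrow> 'a \<Rightarrow> nat) \<Rightarrow> (nat \<Rightarrow> nat) \<Rightarrow> nat \<Rightarrow> nat" where
  "alg_cell q s k C \<psi> lam a = restrict (\<lambda>i. cell_index q k (alg_digit C \<psi> lam a i)) {1..s}"

lemma alg_cell_apply: "i \<in> {1..s} \<Longrightarrow> alg_cell q s k C \<psi> lam a i = cell_index q k (alg_digit C \<psi> lam a i)"
  by (simp add: alg_cell_def)

lemma alg_digit_less: "lambda_bij q s lam \<Longrightarrow> i \<in> {1..s} \<Longrightarrow> 1 \<le> j \<Longrightarrow> alg_digit C \<psi> lam a i j < q"
  unfolding lambda_bij_def alg_digit_def using bij_betwE by blast

lemma alg_cell_in_PiE:
  assumes "0 < q" and "lambda_bij q s lam"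
  shows "alg_cell q s k C \<psi> lam a \<in> PiE {1..s} (\<lambda>_. {..<q ^ k})"
proof -
  have "cell_index q k (alg_digit C \<psi> lam a i) < q ^ k" if "i \<in> {1..s}" for i
    using alg_digit_less[OF assms(2) that] by (intro cell_index_less[OF assms(1)]) simp
  then show ?thesis unfolding alg_cell_def by simp
qed

lemma optimal_row_lengthsD:
  assumes "optimal_row_lengths s C" and "i \<in> {1..s}" "1 \<le> j" "j \<le> k" "C i j r \<noteq> 0"
  shows "r < s * k"
proof -
  have "r + 1 \<le> s * j" using assms unfolding optimal_row_lengths_def by blast
  moreover have "s * j \<le> s * k" using \<open>j \<le> k\<close> by simp
  ultimately show ?thesis by linarith
qed

lemma alg_cell_local:
  assumes "optimal_row_lengths s C" and "\<And>r. r < s * k \<Longrightarrow> a r = b r"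
  shows "alg_cell q s k C \<psi> lam a = alg_cell q s k C \<psi> lam b"
  unfolding alg_cell_def
proof (intro restrict_ext cell_index_cong)
  fix i j assume i: "i \<in> {1..s}" and j: "j \<in> {1..k}"
  have "a r = b r" if "C i j r \<noteq> 0" for r
    using assms(2) optimal_row_lengthsD[OF assms(1) i _ _ that] j by simp
  then show "alg_digit C \<psi> lam a i j = alg_digit C \<psi> lam b i j"
    unfolding alg_digit_def by (intro arg_cong[where f = "lam i j"] sum.cong) auto
qed

lemma alg_cell_eq_iff:
  assumes q: "0 < q" and lam: "lambda_bij q s lam"
  shows "alg_cell q s k C \<psi> lam a = alg_cell q s k C \<psi> lam b \<longleftrightarrow>
    (\<forall>i\<in>{1..s}. \<forall>j\<in>{1..k}. (\<Sum>r\<in>{r. C i j r \<noteq> 0}. C i j r * \<psi> r (a r)) =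
                           (\<Sum>r\<in>{r. C i j r \<noteq> 0}. C i j r * \<psi> r (b r)))"
    (is "?cells \<longleftrightarrow> (\<forall>i\<in>{1..s}. \<forall>j\<in>{1..k}. ?sum a i j = ?sum b i j)")
proof
  assume ?cells
  show "\<forall>i\<in>{1..s}. \<forall>j\<in>{1..k}. ?sum a i j = ?sum b i j"
  proof (intro ballI)
    fix i j assume i: "i \<in> {1..s}" and j: "j \<in> {1..k}"
    have "cell_index q k (alg_digit C \<psi> lam a i) = cell_index q k (alg_digit C \<psi> lam b i)"
      using \<open>?cells\<close> alg_cell_apply[OF i, of q k C \<psi> lam] by metis
    with alg_digit_less[OF lam i] have "alg_digit C \<psi> lam a i j = alg_digit C \<psi> lam b i j"
      using cell_index_inj[where d = "alg_digit C \<psi> lam a i" and d' = "alg_digit C \<psi> lam b i", OF q]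
        j by simp
    moreover have "inj (lam i j)"
      using lam i j bij_betw_imp_inj_on unfolding lambda_bij_def by fastforce
    ultimately show "?sum a i j = ?sum b i j" unfolding alg_digit_def by (auto dest: injD)
  qed
next
  assume "\<forall>i\<in>{1..s}. \<forall>j\<in>{1..k}. ?sum a i j = ?sum b i j"
  then show ?cells
    unfolding alg_cell_def alg_digit_def by (intro restrict_ext cell_index_cong) auto
qed

lemma alg_point_cell_bounds:
  assumes q: "0 < q" and lam: "lambda_bij q s lam" and i: "i \<in> {1..s}"
  shows "real (alg_cell q s k C \<psi> lam a i) / real q ^ k \<le> alg_point q C \<psi> lam a i"
    and "alg_point q C \<psi> lam a i \<le> (real (alg_cell q s k C \<psi> lam a i) + 1) / real q ^ k"
proof -
  let ?d = "\<lambda>j. if j = 0 then 0 else alg_digit C \<psi> lam a i j"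
  have d: "\<And>j. ?d j < q" using alg_digit_less[OF lam i] q by simp
  have "alg_cell q s k C \<psi> lam a i = cell_index q k ?d"
    unfolding alg_cell_apply[OF i] by (rule cell_index_cong) simp
  moreover have "alg_point q C \<psi> lam a i = (\<Sum>j. real (?d (Suc j)) / real q ^ Suc j)"
    by (simp add: alg_point_def)
  ultimately show "real (alg_cell q s k C \<psi> lam a i) / real q ^ k \<le> alg_point q C \<psi> lam a i"
    and "alg_point q C \<psi> lam a i \<le> (real (alg_cell q s k C \<psi> lam a i) + 1) / real q ^ k"
    using digit_series_cell_bounds[of q ?d k, OF q d] by simp_all
qed

lemma alg_trunc_cell_bounds:
  assumes q: "0 < q" and lam: "lambda_bij q s lam" and i: "i \<in> {1..s}" and "k \<le> m"
  shows "real (alg_cell q s k C \<psi> lam a i) / real q ^ k \<le> alg_trunc q C \<psi> lam m a i"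
    and "alg_trunc q C \<psi> lam m a i < (real (alg_cell q s k C \<psi> lam a i) + 1) / real q ^ k"
proof -
  let ?d = "\<lambda>j. if j = 0 then 0 else alg_digit C \<psi> lam a i j"
  have d: "\<And>j. ?d j < q" using alg_digit_less[OF lam i] q by simp
  have "alg_cell q s k C \<psi> lam a i = cell_index q k ?d"
    unfolding alg_cell_apply[OF i] by (rule cell_index_cong) simp
  moreover have "alg_trunc q C \<psi> lam m a i = (\<Sum>j\<in>{1..m}. real (?d j) / real q ^ j)"
    unfolding alg_trunc_def by (rule sum.cong) auto
  ultimately show "real (alg_cell q s k C \<psi> lam a i) / real q ^ k \<le> alg_trunc q C \<psi> lam m a i"
    and "alg_trunc q C \<psi> lam m a i < (real (alg_cell q s k C \<psi> lam a i) + 1) / real q ^ k"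
    using digit_sum_cell_bounds[of q ?d k m, OF q d \<open>k \<le> m\<close>] by simp_all
qed

text \<open>A \<open>(0, s k, s)\<close>-net meets each of the \<open>q\<^sup>s\<^sup>k\<close> cubes of side \<open>q\<^sup>-\<^sup>k\<close>, and the cube
  of a point is determined by the first \<open>s k\<close> input digits.\<close>

lemma alg_cell_surj_if_net:
  assumes q: "0 < q" and s: "1 \<le> s" and k: "1 \<le> k"
    and opt: "optimal_row_lengths s C" and lam: "lambda_bij q s lam"
    and net: "is_Ts_sequence q (\<lambda>_. 0) s X (\<lambda>m n. alg_trunc q C \<psi> lam m (qdigits q n))"
  shows "PiE {1..s} (\<lambda>_. {..<q ^ k}) \<subseteq> alg_cell q s k C \<psi> lam ` PiE {..<s * k} (\<lambda>_. {..<q})"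
proof
  fix v assume v: "v \<in> PiE {1..s} (\<lambda>_. {..<q ^ k})"
  let ?m = "s * k"
  let ?x = "\<lambda>n. alg_trunc q C \<psi> lam ?m (qdigits q n)"
  have "0 < ?m" using s k by simp
  then have "is_tms_net q 0 ?m s (\<lambda>n. ?x (0 * q ^ ?m + n))"
    using net unfolding is_Ts_sequence_def by blast
  moreover have "(\<Sum>i\<in>{1..s}. k) = ?m - 0" and "\<forall>i\<in>{1..s}. v i < q ^ k"
    using v by (auto simp: PiE_iff)
  ultimately have "card {n. n < q ^ ?m \<and> in_elem_interval q s (\<lambda>_. k) v (?x n)} = 1"
    unfolding is_tms_net_def by simp
  then have "{n. n < q ^ ?m \<and> in_elem_interval q s (\<lambda>_. k) v (?x n)} \<noteq> {}" by force
  then obtain n where n: "in_elem_interval q s (\<lambda>_. k) v (?x n)" by blast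
  have coords: "v i = alg_cell q s k C \<psi> lam (qdigits q n) i" if i: "i \<in> {1..s}" for i
  proof (rule grid_interval_unique)
    show "0 < real q ^ k" using q by simp
    show "real (v i) / real q ^ k \<le> ?x n i" "?x n i < (real (v i) + 1) / real q ^ k"
      using n i unfolding in_elem_interval_def by (simp_all add: add.commute)
    show "real (alg_cell q s k C \<psi> lam (qdigits q n) i) / real q ^ k \<le> ?x n i"
      "?x n i < (real (alg_cell q s k C \<psi> lam (qdigits q n) i) + 1) / real q ^ k"
      using alg_trunc_cell_bounds[OF q lam i, of k ?m C \<psi> "qdigits q n"] s by simp_all
  qed
  have "v = alg_cell q s k C \<psi> lam (qdigits q n)"
    using coords by (intro PiE_ext[OF v alg_cell_in_PiE[OF q lam]]) blast
  also have "\<dots> = alg_cell q s k C \<psi> lam (restrict (qdigits q n) {..<?m})"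
    by (rule alg_cell_local[OF opt]) simp
  finally have "v = alg_cell q s k C \<psi> lam (restrict (qdigits q n) {..<?m})" .
  moreover have "restrict (qdigits q n) {..<?m} \<in> PiE {..<?m} (\<lambda>_. {..<q})"
    using q by (simp add: qdigits_def)
  ultimately show "v \<in> alg_cell q s k C \<psi> lam ` PiE {..<?m} (\<lambda>_. {..<q})" by blast
qed

lemma card_cell_vectors: "card (PiE {1..s} (\<lambda>_. {..<q ^ k})) = q ^ (s * k)"
  by (simp add: card_PiE power_mult mult.commute)

lemma inj_on_alg_cell_if_net:
  assumes q: "0 < q" and s: "1 \<le> s" and k: "1 \<le> k"
    and opt: "optimal_row_lengths s C" and lam: "lambda_bij q s lam"
    and net: "is_Ts_sequence q (\<lambda>_. 0) s X (\<lambda>m n. alg_trunc q C \<psi> lam m (qdigits q n))"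
  shows "inj_on (alg_cell q s k C \<psi> lam) (PiE {..<s * k} (\<lambda>_. {..<q}))"
proof (rule eq_card_imp_inj_on)
  let ?D = "PiE {..<s * k} (\<lambda>_. {..<q})" and ?B = "PiE {1..s} (\<lambda>_. {..<q ^ k})"
  have "alg_cell q s k C \<psi> lam ` ?D = ?B"
  proof (rule subset_antisym)
    show "alg_cell q s k C \<psi> lam ` ?D \<subseteq> ?B" using alg_cell_in_PiE[OF q lam] by (rule image_subsetI)
  qed (rule alg_cell_surj_if_net[OF assms])
  then show "card (alg_cell q s k C \<psi> lam ` ?D) = card ?D"
    by (simp only: card_cell_vectors) (simp add: card_PiE)
qed (simp add: finite_PiE)

text \<open>Whether two digit vectors share a cell depends only on the field elements
  \<open>\<psi>\<^sub>r(a\<^sub>r)\<close>, \<open>r < s k\<close>, so injectivity does not depend on the choice of the bijections.\<close>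

lemma inj_on_alg_cell_transfer:
  assumes q: "0 < q" and opt: "optimal_row_lengths s C"
    and \<psi>: "psi_bij q \<psi>" and lam: "lambda_bij q s lam"
    and \<psi>': "psi_bij q \<psi>'" and lam': "lambda_bij q s lam'"
    and inj': "inj_on (alg_cell q s k C \<psi>' lam') (PiE {..<s * k} (\<lambda>_. {..<q}))"
  shows "inj_on (alg_cell q s k C \<psi> lam) (PiE {..<s * k} (\<lambda>_. {..<q}))"
proof (rule inj_onI)
  let ?D = "PiE {..<s * k} (\<lambda>_. {..<q})"
  fix a b assume a: "a \<in> ?D" and b: "b \<in> ?D"
    and eq: "alg_cell q s k C \<psi> lam a = alg_cell q s k C \<psi> lam b"
  have \<psi>'_onto: "\<psi>' r ` {..<q} = UNIV" for r using \<psi>' unfolding psi_bij_def bij_betw_def by auto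
  define recode where
    "recode c = (\<lambda>r. if r < s * k then inv_into {..<q} (\<psi>' r) (\<psi> r (c r)) else undefined)" for c
  have recode_in: "recode c \<in> ?D" for c
    unfolding recode_def using inv_into_into[of _ "\<psi>' _" "{..<q}"] \<psi>'_onto
    by (auto simp: PiE_iff extensional_def)
  have recode: "\<psi>' r (recode c r) = \<psi> r (c r)" if "r < s * k" for c r
    unfolding recode_def using that f_inv_into_f[of _ "\<psi>' r" "{..<q}"] \<psi>'_onto by auto
  have "(\<Sum>r\<in>{r. C i j r \<noteq> 0}. C i j r * \<psi>' r (recode c r)) = (\<Sum>r\<in>{r. C i j r \<noteq> 0}. C i j r * \<psi> r (c r))"
    if "i \<in> {1..s}" "j \<in> {1..k}" for i j c
    using optimal_row_lengthsD[OF opt that(1)] that(2) recode by (intro sum.cong) auto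
  then have "alg_cell q s k C \<psi>' lam' (recode a) = alg_cell q s k C \<psi>' lam' (recode b)"
    using eq unfolding alg_cell_eq_iff[OF q lam] alg_cell_eq_iff[OF q lam'] by simp
  then have "recode a = recode b" using inj' recode_in by (auto dest: inj_onD)
  show "a = b"
  proof (rule PiE_ext[OF a b])
    fix r assume r: "r \<in> {..<s * k}"
    then have "\<psi> r (a r) = \<psi> r (b r)" using recode \<open>recode a = recode b\<close> by (metis lessThan_iff)
    moreover have "inj_on (\<psi> r) {..<q}" using \<psi> unfolding psi_bij_def bij_betw_def by auto
    ultimately show "a r = b r" using a b r by (auto simp: PiE_iff inj_on_eq_iff)
  qed
qed

lemma bij_betw_alg_cell:
  assumes q: "0 < q" and lam: "lambda_bij q s lam"
    and inj: "inj_on (alg_cell q s k C \<psi> lam) (PiE {..<s * k} (\<lambda>_. {..<q}))"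
  shows "bij_betw (alg_cell q s k C \<psi> lam) (PiE {..<s * k} (\<lambda>_. {..<q}))
    (PiE {1..s} (\<lambda>_. {..<q ^ k}))"
proof -
  let ?D = "PiE {..<s * k} (\<lambda>_. {..<q})" and ?B = "PiE {1..s} (\<lambda>_. {..<q ^ k})"
  have "alg_cell q s k C \<psi> lam ` ?D \<subseteq> ?B" using alg_cell_in_PiE[OF q lam] by (rule image_subsetI)
  moreover have "card (alg_cell q s k C \<psi> lam ` ?D) = card ?B"
    using card_image[OF inj] by (simp only: card_cell_vectors) (simp add: card_PiE)
  ultimately show ?thesis
    unfolding bij_betw_def using inj by (simp add: card_subset_eq finite_PiE)
qed

lemma alg_cell_determines_qadic_trunc:
  assumes q: "0 < q" and opt: "optimal_row_lengths s C"
    and bij: "bij_betw (alg_cell q s k C \<psi> lam) (PiE {..<s * k} (\<lambda>_. {..<q}))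
      (PiE {1..s} (\<lambda>_. {..<q ^ k}))"
  obtains G where "bij_betw G (PiE {1..s} (\<lambda>_. {..<q ^ k})) {..<q ^ (s * k)}"
    and "\<And>a. (\<And>r. a r < q) \<Longrightarrow> qadic_trunc q (s * k) a = G (alg_cell q s k C \<psi> lam a)"
proof
  let ?D = "PiE {..<s * k} (\<lambda>_. {..<q})"
  let ?G = "qadic_trunc q (s * k) \<circ> inv_into ?D (alg_cell q s k C \<psi> lam)"
  show "bij_betw ?G (PiE {1..s} (\<lambda>_. {..<q ^ k})) {..<q ^ (s * k)}"
    by (rule bij_betw_trans[OF bij_betw_inv_into[OF bij] bij_betw_qadic_trunc[OF q]])
  fix a :: "nat \<Rightarrow> nat" assume "\<And>r. a r < q"
  then have a: "restrict a {..<s * k} \<in> ?D" by simp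
  have "alg_cell q s k C \<psi> lam a = alg_cell q s k C \<psi> lam (restrict a {..<s * k})"
    by (rule alg_cell_local[OF opt]) simp
  moreover have "qadic_trunc q (s * k) a = qadic_trunc q (s * k) (restrict a {..<s * k})"
    by (rule qadic_trunc_cong) simp
  ultimately show "qadic_trunc q (s * k) a = ?G (alg_cell q s k C \<psi> lam a)"
    using bij_betw_inv_into_left[OF bij a] by simp
qed

lemma alg_cells_equidistributed_iff_truncations:
  assumes q: "0 < q" and s: "1 \<le> s" and k: "1 \<le> k" and opt: "optimal_row_lengths s C"
    and \<psi>: "psi_bij q \<psi>" and lam: "lambda_bij q s lam"
    and \<psi>': "psi_bij q \<psi>'" and lam': "lambda_bij q s lam'"
    and net: "is_Ts_sequence q (\<lambda>_. 0) s X (\<lambda>m n. alg_trunc q C \<psi>' lam' m (qdigits q n))"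
    and digits: "\<And>n r. sq n r < q"
  shows "equidistributed_on (\<lambda>n. alg_cell q s k C \<psi> lam (sq n)) (PiE {1..s} (\<lambda>_. {..<q ^ k})) \<longleftrightarrow>
    equidistributed_on (\<lambda>n. qadic_trunc q (s * k) (sq n)) {..<q ^ (s * k)}"
proof -
  have "inj_on (alg_cell q s k C \<psi> lam) (PiE {..<s * k} (\<lambda>_. {..<q}))"
    using inj_on_alg_cell_if_net[OF q s k opt lam' net]
    by (rule inj_on_alg_cell_transfer[OF q opt \<psi> lam \<psi>' lam'])
  then have "bij_betw (alg_cell q s k C \<psi> lam) (PiE {..<s * k} (\<lambda>_. {..<q}))
      (PiE {1..s} (\<lambda>_. {..<q ^ k}))"
    by (rule bij_betw_alg_cell[OF q lam])
  then obtain G where G: "bij_betw G (PiE {1..s} (\<lambda>_. {..<q ^ k})) {..<q ^ (s * k)}"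
    and trunc: "\<And>a. (\<And>r. a r < q) \<Longrightarrow> qadic_trunc q (s * k) a = G (alg_cell q s k C \<psi> lam a)"
    using alg_cell_determines_qadic_trunc[OF q opt] by blast
  have "equidistributed_on (\<lambda>n. qadic_trunc q (s * k) (sq n)) {..<q ^ (s * k)} \<longleftrightarrow>
      equidistributed_on (\<lambda>n. alg_cell q s k C \<psi> lam (sq n)) (PiE {1..s} (\<lambda>_. {..<q ^ k}))"
    using trunc digits by (intro equidistributed_on_bij_betw[OF G alg_cell_in_PiE[OF q lam]]) simp
  then show ?thesis by (rule sym)
qed

subsection \<open>Discrepancy and cell frequencies\<close>

lemma abs_prod_diff_le_sum:
  fixes f g :: "'b \<Rightarrow> real"
  assumes "finite I" and "\<And>i. i \<in> I \<Longrightarrow> 0 \<le> f i \<and> f i \<le> 1 \<and> 0 \<le> g i \<and> g i \<le> 1"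
  shows "\<bar>prod f I - prod g I\<bar> \<le> (\<Sum>i\<in>I. \<bar>f i - g i\<bar>)"
  using assms
proof (induction I rule: finite_induct)
  case empty
  then show ?case by simp
next
  case (insert a F)
  let ?P = "prod f F" and ?Q = "prod g F"
  have Q: "0 \<le> ?Q" "?Q \<le> 1" using insert by (auto intro: prod_nonneg prod_le_1)
  have fa: "0 \<le> f a" "f a \<le> 1" using insert by auto
  have "f a * ?P - g a * ?Q = f a * (?P - ?Q) + (f a - g a) * ?Q" by (simp add: algebra_simps)
  moreover have "\<bar>f a * (?P - ?Q)\<bar> \<le> \<bar>?P - ?Q\<bar>" using fa by (simp add: abs_mult mult_left_le_one_le)
  moreover have "\<bar>(f a - g a) * ?Q\<bar> \<le> \<bar>f a - g a\<bar>" using Q by (simp add: abs_mult mult_right_le_one_le)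
  ultimately have "\<bar>f a * ?P - g a * ?Q\<bar> \<le> \<bar>?P - ?Q\<bar> + \<bar>f a - g a\<bar>" by linarith
  then show ?case using insert by simp
qed

lemma abs_prod_ratio_diff_le:
  fixes c b :: "'b \<Rightarrow> real"
  assumes "finite I" and "0 < Q"
    and "\<And>i. i \<in> I \<Longrightarrow> 0 \<le> c i \<and> c i \<le> Q" and "\<And>i. i \<in> I \<Longrightarrow> 0 \<le> b i \<and> b i \<le> 1"
    and "\<And>i. i \<in> I \<Longrightarrow> \<bar>c i - b i * Q\<bar> \<le> 1"
  shows "\<bar>(\<Prod>i\<in>I. c i / Q) - prod b I\<bar> \<le> real (card I) / Q"
proof -
  have "\<bar>(\<Prod>i\<in>I. c i / Q) - prod b I\<bar> \<le> (\<Sum>i\<in>I. \<bar>c i / Q - b i\<bar>)"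
    using assms by (intro abs_prod_diff_le_sum) auto
  also have "\<dots> = (\<Sum>i\<in>I. \<bar>c i - b i * Q\<bar> / Q)"
    using \<open>0 < Q\<close> by (intro sum.cong refl) (simp add: field_simps)
  also have "\<dots> \<le> (\<Sum>i\<in>I. 1 / Q)"
    using assms by (intro sum_mono divide_right_mono) auto
  finally show ?thesis by simp
qed

lemma anchored_box_freq_le_star_discrepancy:
  assumes "\<And>i. i \<in> {1..s} \<Longrightarrow> 0 \<le> b i \<and> b i \<le> 1"
  shows "\<bar>rel_freq (\<lambda>n. \<forall>i\<in>{1..s}. x n i < b i) N - (\<Prod>i\<in>{1..s}. b i)\<bar> \<le> star_discrepancy s x N"
proof -
  have "\<bar>rel_freq (\<lambda>n. \<forall>i\<in>{1..s}. x n i < c i) N - (\<Prod>i\<in>{1..s}. c i)\<bar> \<le> 1"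
    if "\<forall>i\<in>{1..s}. 0 \<le> c i \<and> c i \<le> 1" for c
    using that rel_freq_nonneg rel_freq_le_one prod_nonneg[of "{1..s}" c] prod_le_1[of "{1..s}" c]
    by (simp add: abs_le_iff) (smt (verit))
  then show ?thesis
    unfolding star_discrepancy_def rel_freq_def[symmetric]
    by (intro cSUP_upper bdd_aboveI2[where M = 1]) (use assms in auto)
qed

lemma star_discrepancy_le:
  assumes "\<And>b. (\<And>i. i \<in> {1..s} \<Longrightarrow> 0 \<le> b i \<and> b i \<le> 1) \<Longrightarrow>
    \<bar>rel_freq (\<lambda>n. \<forall>i\<in>{1..s}. x n i < b i) N - (\<Prod>i\<in>{1..s}. b i)\<bar> \<le> B"
  shows "star_discrepancy s x N \<le> B"
  unfolding star_discrepancy_def rel_freq_def[symmetric]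
  by (rule cSUP_least) (use assms in \<open>auto intro: exI[of _ "\<lambda>_. 0"]\<close>)

lemma card_nat_less_real:
  fixes z :: real
  assumes "z \<le> real Q"
  shows "card {c. c < Q \<and> real c < z} = nat \<lceil>z\<rceil>"
proof -
  have iff: "real c < z \<longleftrightarrow> c < nat \<lceil>z\<rceil>" for c
    by (metis less_ceiling_iff of_int_of_nat_eq zless_nat_eq_int_zless)
  have "c < Q" if "real c < z" for c using that assms by simp
  then have "{c. c < Q \<and> real c < z} = {..<nat \<lceil>z\<rceil>}"
    using iff unfolding lessThan_def by blast
  then show ?thesis by simp
qed

lemma card_nat_less_real_approx:
  fixes y :: real
  assumes "0 \<le> y" and "y \<le> real Q"
  shows "\<bar>real (card {c. c < Q \<and> real c < y}) - y\<bar> \<le> 1"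
    and "\<bar>real (card {c. c < Q \<and> real c + 1 < y}) - y\<bar> \<le> 1"
proof -
  have ceiling: "z \<le> real (nat \<lceil>z\<rceil>)" "real (nat \<lceil>z\<rceil>) \<le> z + 1" if "-1 \<le> z" for z :: real
    using that le_of_int_ceiling[of z] of_int_ceiling_le_add_one[of z] by (cases "0 \<le> \<lceil>z\<rceil>"; simp)+
  show "\<bar>real (card {c. c < Q \<and> real c < y}) - y\<bar> \<le> 1"
    unfolding card_nat_less_real[OF assms(2)] abs_le_iff using assms(1) ceiling[of y] by linarith
  have "{c. c < Q \<and> real c + 1 < y} = {c. c < Q \<and> real c < y - 1}" by auto
  moreover have "card {c. c < Q \<and> real c < y - 1} = nat \<lceil>y - 1\<rceil>"
    using assms by (intro card_nat_less_real) simp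
  ultimately show "\<bar>real (card {c. c < Q \<and> real c + 1 < y}) - y\<bar> \<le> 1"
    using assms(1) ceiling[of "y - 1"] by (simp only: abs_le_iff) linarith
qed

lemma cell_union_freq_approx:
  fixes cell :: "nat \<Rightarrow> nat \<Rightarrow> nat" and b :: "nat \<Rightarrow> real"
  assumes q: "0 < q"
    and S: "\<And>i. i \<in> {1..s} \<Longrightarrow> S i \<subseteq> {..<q ^ k}"
    and S_approx: "\<And>i. i \<in> {1..s} \<Longrightarrow> \<bar>real (card (S i)) - b i * real (q ^ k)\<bar> \<le> 1"
    and b: "\<And>i. i \<in> {1..s} \<Longrightarrow> 0 \<le> b i \<and> b i \<le> 1"
    and freq: "\<And>v. v \<in> PiE {1..s} (\<lambda>_. {..<q ^ k}) \<Longrightarrow>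
      \<bar>rel_freq (\<lambda>n. cell n = v) N - 1 / real q ^ (s * k)\<bar> \<le> \<delta>"
  shows "\<bar>rel_freq (\<lambda>n. cell n \<in> PiE {1..s} S) N - (\<Prod>i\<in>{1..s}. b i)\<bar>
    \<le> real (q ^ (s * k)) * \<delta> + real s / real q ^ k"
proof -
  let ?S = "PiE {1..s} S" and ?B = "PiE {1..s} (\<lambda>_. {..<q ^ k})"
  have SB: "?S \<subseteq> ?B" using S by (force simp: PiE_iff)
  have finB: "finite ?B" by (simp add: finite_PiE)
  have "0 \<le> \<delta>" using freq[of "restrict (\<lambda>_. 0) {1..s}"] q by (force simp: PiE_iff)
  have "\<bar>rel_freq (\<lambda>n. cell n \<in> ?S) N - real (card ?S) / real q ^ (s * k)\<bar>
      = \<bar>\<Sum>v\<in>?S. rel_freq (\<lambda>n. cell n = v) N - 1 / real q ^ (s * k)\<bar>"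
    using finite_subset[OF SB finB] by (simp add: rel_freq_fibres sum_subtractf)
  also have "\<dots> \<le> (\<Sum>v\<in>?S. \<bar>rel_freq (\<lambda>n. cell n = v) N - 1 / real q ^ (s * k)\<bar>)"
    by (rule sum_abs)
  also have "\<dots> \<le> (\<Sum>v\<in>?S. \<delta>)" using freq SB by (intro sum_mono) auto
  also have "\<dots> \<le> real (card ?B) * \<delta>"
    using card_mono[OF finB SB] \<open>0 \<le> \<delta>\<close> by (simp add: mult_right_mono)
  finally have cells: "\<bar>rel_freq (\<lambda>n. cell n \<in> ?S) N - real (card ?S) / real q ^ (s * k)\<bar>
      \<le> real (q ^ (s * k)) * \<delta>"
    by (simp only: card_cell_vectors)
  have "real (card (S i)) \<le> real (q ^ k)" if "i \<in> {1..s}" for i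
    using card_mono[OF _ S[OF that]] by simp
  then have "\<bar>(\<Prod>i\<in>{1..s}. real (card (S i)) / real (q ^ k)) - (\<Prod>i\<in>{1..s}. b i)\<bar>
      \<le> real (card {1..s}) / real (q ^ k)"
    using q b S_approx by (intro abs_prod_ratio_diff_le) auto
  then have box: "\<bar>real (card ?S) / real q ^ (s * k) - (\<Prod>i\<in>{1..s}. b i)\<bar> \<le> real s / real q ^ k"
    by (simp add: card_PiE prod_dividef power_mult mult.commute)
  show ?thesis using cells box by linarith
qed

lemma anchored_box_freq_between_cell_unions:
  fixes x :: "nat \<Rightarrow> nat \<Rightarrow> real" and cell :: "nat \<Rightarrow> nat \<Rightarrow> nat" and b :: "nat \<Rightarrow> real"
  assumes q: "0 < q"
    and cell: "\<And>n. cell n \<in> PiE {1..s} (\<lambda>_. {..<q ^ k})"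
    and cell_bounds: "\<And>n i. i \<in> {1..s} \<Longrightarrow>
      real (cell n i) / real q ^ k \<le> x n i \<and> x n i \<le> (real (cell n i) + 1) / real q ^ k"
  shows "rel_freq (\<lambda>n. cell n \<in> PiE {1..s} (\<lambda>i. {c. c < q ^ k \<and> real c + 1 < b i * real (q ^ k)})) N
      \<le> rel_freq (\<lambda>n. \<forall>i\<in>{1..s}. x n i < b i) N"
    and "rel_freq (\<lambda>n. \<forall>i\<in>{1..s}. x n i < b i) N
      \<le> rel_freq (\<lambda>n. cell n \<in> PiE {1..s} (\<lambda>i. {c. c < q ^ k \<and> real c < b i * real (q ^ k)})) N"
proof -
  have Q: "0 < real q ^ k" using q by simp
  show "rel_freq (\<lambda>n. cell n \<in> PiE {1..s} (\<lambda>i. {c. c < q ^ k \<and> real c + 1 < b i * real (q ^ k)})) N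
      \<le> rel_freq (\<lambda>n. \<forall>i\<in>{1..s}. x n i < b i) N"
  proof (rule rel_freq_mono, intro ballI)
    fix n i assume "cell n \<in> PiE {1..s} (\<lambda>i. {c. c < q ^ k \<and> real c + 1 < b i * real (q ^ k)})"
      and i: "i \<in> {1..s}"
    then have "(real (cell n i) + 1) / real q ^ k < b i" using Q
      by (auto simp: PiE_iff pos_divide_less_eq)
    then show "x n i < b i" using cell_bounds[OF i, of n] by linarith
  qed
  show "rel_freq (\<lambda>n. \<forall>i\<in>{1..s}. x n i < b i) N
      \<le> rel_freq (\<lambda>n. cell n \<in> PiE {1..s} (\<lambda>i. {c. c < q ^ k \<and> real c < b i * real (q ^ k)})) N"
  proof (rule rel_freq_mono)
    fix n assume below: "\<forall>i\<in>{1..s}. x n i < b i"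
    have "real (cell n i) < b i * real (q ^ k)" if "i \<in> {1..s}" for i
    proof -
      have "real (cell n i) / real q ^ k < b i" using cell_bounds[OF that, of n] below that by fastforce
      then show ?thesis using Q by (simp add: pos_divide_less_eq)
    qed
    then show "cell n \<in> PiE {1..s} (\<lambda>i. {c. c < q ^ k \<and> real c < b i * real (q ^ k)})"
      using cell[of n] by (auto simp: PiE_iff)
  qed
qed

lemma anchored_box_freq_cell_approx:
  fixes x :: "nat \<Rightarrow> nat \<Rightarrow> real" and cell :: "nat \<Rightarrow> nat \<Rightarrow> nat" and b :: "nat \<Rightarrow> real"
  assumes q: "0 < q"
    and cell: "\<And>n. cell n \<in> PiE {1..s} (\<lambda>_. {..<q ^ k})"
    and cell_bounds: "\<And>n i. i \<in> {1..s} \<Longrightarrow>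
      real (cell n i) / real q ^ k \<le> x n i \<and> x n i \<le> (real (cell n i) + 1) / real q ^ k"
    and b: "\<And>i. i \<in> {1..s} \<Longrightarrow> 0 \<le> b i \<and> b i \<le> 1"
    and freq: "\<And>v. v \<in> PiE {1..s} (\<lambda>_. {..<q ^ k}) \<Longrightarrow>
      \<bar>rel_freq (\<lambda>n. cell n = v) N - 1 / real q ^ (s * k)\<bar> \<le> \<delta>"
  shows "\<bar>rel_freq (\<lambda>n. \<forall>i\<in>{1..s}. x n i < b i) N - (\<Prod>i\<in>{1..s}. b i)\<bar>
    \<le> real (q ^ (s * k)) * \<delta> + real s / real q ^ k"
proof -
  have y: "0 \<le> b i * real (q ^ k)" "b i * real (q ^ k) \<le> real (q ^ k)" if "i \<in> {1..s}" for i
    using b[OF that] by (auto simp: mult_left_le_one_le)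
  then have y': "0 \<le> b i * real q ^ k" "b i * real q ^ k \<le> real q ^ k" if "i \<in> {1..s}" for i
    using that by (simp_all add: of_nat_power)
  have "\<bar>rel_freq (\<lambda>n. cell n \<in> PiE {1..s} (\<lambda>i. {c. c < q ^ k \<and> real c + 1 < b i * real (q ^ k)})) N
      - (\<Prod>i\<in>{1..s}. b i)\<bar> \<le> real (q ^ (s * k)) * \<delta> + real s / real q ^ k"
    by (rule cell_union_freq_approx[OF q _ _ b freq]) (auto intro!: card_nat_less_real_approx y y')
  moreover have "\<bar>rel_freq (\<lambda>n. cell n \<in> PiE {1..s} (\<lambda>i. {c. c < q ^ k \<and> real c < b i * real (q ^ k)})) N
      - (\<Prod>i\<in>{1..s}. b i)\<bar> \<le> real (q ^ (s * k)) * \<delta> + real s / real q ^ k"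
    by (rule cell_union_freq_approx[OF q _ _ b freq]) (auto intro!: card_nat_less_real_approx y y')
  ultimately show ?thesis
    using anchored_box_freq_between_cell_unions[where cell = cell and x = x and b = b and N = N,
        OF q cell cell_bounds]
    by (simp add: abs_le_iff)
qed

lemma unif_distr_if_cells_equidistributed:
  fixes x :: "nat \<Rightarrow> nat \<Rightarrow> real" and cell :: "nat \<Rightarrow> nat \<Rightarrow> nat \<Rightarrow> nat"
  assumes q: "1 < q"
    and cell: "\<And>k n. cell k n \<in> PiE {1..s} (\<lambda>_. {..<q ^ k})"
    and cell_bounds: "\<And>k n i. i \<in> {1..s} \<Longrightarrow>
      real (cell k n i) / real q ^ k \<le> x n i \<and> x n i \<le> (real (cell k n i) + 1) / real q ^ k"
    and equi: "\<And>k. 1 \<le> k \<Longrightarrow> equidistributed_on (cell k) (PiE {1..s} (\<lambda>_. {..<q ^ k}))"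
  shows "unif_distr s x"
  unfolding unif_distr_def
proof (rule LIMSEQ_I)
  fix r :: real assume r: "0 < r"
  have "(\<lambda>k. real s / real q ^ k) \<longlonglongrightarrow> 0" using q by (intro LIMSEQ_divide_realpow_zero) simp
  then have "eventually (\<lambda>k. real s / real q ^ k < r / 2) sequentially"
    by (rule order_tendstoD(2)) (use r in simp)
  then have "eventually (\<lambda>k. 1 \<le> k \<and> real s / real q ^ k < r / 2) sequentially"
    by (intro eventually_conj eventually_ge_at_top)
  then obtain k where k: "1 \<le> k" "real s / real q ^ k < r / 2"
    unfolding eventually_sequentially by blast
  let ?B = "PiE {1..s} (\<lambda>_. {..<q ^ k})" and ?M = "real (q ^ (s * k))"
  define \<delta> where "\<delta> = r / (4 * ?M)"
  have M: "0 < ?M" using q by simp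
  then have "0 < \<delta>" and M\<delta>: "?M * \<delta> = r / 4" using r by (simp_all add: \<delta>_def)
  have "eventually (\<lambda>N. \<forall>v\<in>?B. \<bar>rel_freq (\<lambda>n. cell k n = v) N - 1 / real q ^ (s * k)\<bar> < \<delta>) sequentially"
    using equidistributed_on_eventually_close[OF finite_PiE equi[OF k(1)] \<open>0 < \<delta>\<close>]
    unfolding card_cell_vectors by simp
  then obtain N0 where N0: "\<And>N v. N0 \<le> N \<Longrightarrow> v \<in> ?B \<Longrightarrow>
      \<bar>rel_freq (\<lambda>n. cell k n = v) N - 1 / real q ^ (s * k)\<bar> < \<delta>"
    unfolding eventually_sequentially by blast
  show "\<exists>N0. \<forall>N\<ge>N0. norm (star_discrepancy s x N - 0) < r"
  proof (intro exI allI impI)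
    fix N assume "N0 \<le> N"
    have "star_discrepancy s x N \<le> ?M * \<delta> + real s / real q ^ k"
      using N0[OF \<open>N0 \<le> N\<close>] q
      by (intro star_discrepancy_le anchored_box_freq_cell_approx[OF _ cell cell_bounds]) 
        (auto intro: less_imp_le)
    moreover have "0 \<le> star_discrepancy s x N"
      using anchored_box_freq_le_star_discrepancy[of s "\<lambda>_. 0" x N] by simp
    ultimately show "norm (star_discrepancy s x N - 0) < r" using M\<delta> k(2) r by simp
  qed
qed

lemma anchored_box_freq_tendsto:
  assumes "unif_distr s x" and "\<And>i. i \<in> {1..s} \<Longrightarrow> 0 \<le> b i \<and> b i \<le> 1"
  shows "rel_freq (\<lambda>n. \<forall>i\<in>{1..s}. x n i < b i) \<longlonglongrightarrow> (\<Prod>i\<in>{1..s}. b i)"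
proof -
  have "(\<lambda>N. rel_freq (\<lambda>n. \<forall>i\<in>{1..s}. x n i < b i) N - (\<Prod>i\<in>{1..s}. b i)) \<longlonglongrightarrow> 0"
  proof (rule Lim_null_comparison[where g = "star_discrepancy s x"])
    show "eventually (\<lambda>N. norm (rel_freq (\<lambda>n. \<forall>i\<in>{1..s}. x n i < b i) N - (\<Prod>i\<in>{1..s}. b i))
        \<le> star_discrepancy s x N) sequentially"
      using anchored_box_freq_le_star_discrepancy[where b = b, OF assms(2)] by simp
    show "star_discrepancy s x \<longlonglongrightarrow> 0" using assms(1) by (simp add: unif_distr_def)
  qed
  then show ?thesis by (rule LIM_zero_cancel)
qed

lemma prod_indicator_real:
  "finite I \<Longrightarrow> (\<Prod>i\<in>I. if P i then 1 else 0 :: real) = (if \<forall>i\<in>I. P i then 1 else 0)"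
  by (induction I rule: finite_induct) auto

lemma prod_diff_eq_sum_corners:
  fixes f g :: "'b \<Rightarrow> 'c::comm_ring_1"
  assumes "finite I"
  shows "(\<Prod>i\<in>I. g i - f i) = (\<Sum>X\<in>Pow I. (-1) ^ card X * (\<Prod>i\<in>I. if i \<in> X then f i else g i))"
  unfolding prod_diff_conv_sum[OF assms]
proof (intro sum.cong refl)
  fix X assume "X \<in> Pow I"
  then have "(\<Prod>i\<in>I. if i \<in> X then f i else g i) = prod f X * prod g (I - X)"
    using assms by (simp add: prod.If_cases Int_absorb1 Diff_eq)
  then show "(-1) ^ card X * prod f X * prod g (I - X) =
      (-1) ^ card X * (\<Prod>i\<in>I. if i \<in> X then f i else g i)"
    by (simp add: mult.assoc)
qed

lemma box_indicator_eq_sum_corners: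
  fixes y \<alpha> \<beta> :: "'b \<Rightarrow> real"
  assumes fin: "finite I" and "\<And>i. i \<in> I \<Longrightarrow> \<alpha> i \<le> \<beta> i"
  shows "(if \<forall>i\<in>I. \<alpha> i \<le> y i \<and> y i < \<beta> i then 1 else 0 :: real) =
    (\<Sum>X\<in>Pow I. (-1) ^ card X * (if \<forall>i\<in>I. y i < (if i \<in> X then \<alpha> i else \<beta> i) then 1 else 0))"
proof -
  have "(if \<forall>i\<in>I. \<alpha> i \<le> y i \<and> y i < \<beta> i then 1 else 0 :: real) =
      (\<Prod>i\<in>I. (if y i < \<beta> i then 1 else 0) - (if y i < \<alpha> i then 1 else 0))"
  proof (unfold prod_indicator_real[OF fin, symmetric], intro prod.cong refl)
    fix i assume "i \<in> I"
    then show "(if \<alpha> i \<le> y i \<and> y i < \<beta> i then 1 else 0) =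
      (if y i < \<beta> i then 1 else 0) - (if y i < \<alpha> i then 1 else 0 :: real)"
      using assms(2)[of i] by auto
  qed
  also have "\<dots> = (\<Sum>X\<in>Pow I. (-1) ^ card X * (\<Prod>i\<in>I. if y i < (if i \<in> X then \<alpha> i else \<beta> i) then 1 else 0))"
    unfolding prod_diff_eq_sum_corners[OF fin]
    by (intro sum.cong refl arg_cong2[where f = times] prod.cong) auto
  finally show ?thesis by (simp only: prod_indicator_real[OF fin])
qed

lemma box_freq_tendsto:
  fixes x :: "nat \<Rightarrow> nat \<Rightarrow> real" and \<alpha> \<beta> :: "nat \<Rightarrow> real"
  assumes fin: "finite I"
    and anchored: "\<And>b. (\<And>i. i \<in> I \<Longrightarrow> 0 \<le> b i \<and> b i \<le> 1) \<Longrightarrow>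
      rel_freq (\<lambda>n. \<forall>i\<in>I. x n i < b i) \<longlonglongrightarrow> (\<Prod>i\<in>I. b i)"
    and \<alpha>\<beta>: "\<And>i. i \<in> I \<Longrightarrow> 0 \<le> \<alpha> i \<and> \<alpha> i \<le> \<beta> i \<and> \<beta> i \<le> 1"
  shows "rel_freq (\<lambda>n. \<forall>i\<in>I. \<alpha> i \<le> x n i \<and> x n i < \<beta> i) \<longlonglongrightarrow> (\<Prod>i\<in>I. \<beta> i - \<alpha> i)"
proof -
  define corner where "corner X i = (if i \<in> X then \<alpha> i else \<beta> i)" for X i
  have card_sum: "real (card {n. n < N \<and> P n}) = (\<Sum>n<N. if P n then 1 else 0)" for N :: nat and P
    by (simp add: sum.If_cases Int_def)
  have indicator: "(if \<forall>i\<in>I. \<alpha> i \<le> x n i \<and> x n i < \<beta> i then 1 else 0 :: real) =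
      (\<Sum>X\<in>Pow I. (-1) ^ card X * (if \<forall>i\<in>I. x n i < corner X i then 1 else 0))" for n
    unfolding corner_def using \<alpha>\<beta> by (intro box_indicator_eq_sum_corners[OF fin]) simp
  have "rel_freq (\<lambda>n. \<forall>i\<in>I. \<alpha> i \<le> x n i \<and> x n i < \<beta> i) =
      (\<lambda>N. \<Sum>X\<in>Pow I. (-1) ^ card X * rel_freq (\<lambda>n. \<forall>i\<in>I. x n i < corner X i) N)"
    unfolding rel_freq_def card_sum indicator
    by (rule ext, subst sum.swap) (simp add: sum_distrib_left sum_divide_distrib)
  moreover have "(\<lambda>N. \<Sum>X\<in>Pow I. (-1) ^ card X * rel_freq (\<lambda>n. \<forall>i\<in>I. x n i < corner X i) N)
      \<longlonglongrightarrow> (\<Sum>X\<in>Pow I. (-1) ^ card X * (\<Prod>i\<in>I. corner X i))"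
  proof (intro tendsto_sum tendsto_mult_left anchored)
    fix X i assume "i \<in> I"
    then show "0 \<le> corner X i \<and> corner X i \<le> 1" using \<alpha>\<beta>[of i] by (auto simp: corner_def)
  qed
  moreover have "(\<Sum>X\<in>Pow I. (-1) ^ card X * (\<Prod>i\<in>I. corner X i)) = (\<Prod>i\<in>I. \<beta> i - \<alpha> i)"
    unfolding prod_diff_eq_sum_corners[OF fin] corner_def ..
  ultimately show ?thesis by simp
qed

lemma power_minus_ge:
  fixes a \<delta> :: real
  assumes "0 \<le> \<delta>" and "\<delta> \<le> a" and "a \<le> 1"
  shows "a ^ n - real n * \<delta> \<le> (a - \<delta>) ^ n"
proof -
  have "\<bar>(\<Prod>i<n. a - \<delta>) - (\<Prod>i<n. a)\<bar> \<le> (\<Sum>i<n. \<bar>(a - \<delta>) - a\<bar>)"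
    using assms by (intro abs_prod_diff_le_sum) auto
  then show ?thesis using assms(1) by (simp add: abs_le_iff)
qed

text \<open>Shrinking the cell \<open>w\<close> by \<open>\<delta>\<close> from below yields a half-open box of volume close to
  \<open>q\<^sup>-\<^sup>s\<^sup>k\<close> all of whose points lie in cell \<open>w\<close>.\<close>

lemma cell_freq_lower_bound:
  fixes x :: "nat \<Rightarrow> nat \<Rightarrow> real" and cell :: "nat \<Rightarrow> nat \<Rightarrow> nat"
  assumes q: "0 < q" and ud: "unif_distr s x"
    and cell: "\<And>n. cell n \<in> PiE {1..s} (\<lambda>_. {..<q ^ k})"
    and cell_bounds: "\<And>n i. i \<in> {1..s} \<Longrightarrow>
      real (cell n i) / real q ^ k \<le> x n i \<and> x n i \<le> (real (cell n i) + 1) / real q ^ k"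
    and w: "w \<in> PiE {1..s} (\<lambda>_. {..<q ^ k})" and \<eta>: "0 < \<eta>"
  shows "eventually (\<lambda>N. 1 / real q ^ (s * k) - \<eta> \<le> rel_freq (\<lambda>n. cell n = w) N) sequentially"
proof -
  let ?Q = "real q ^ k"
  have Q: "0 < ?Q" "1 / ?Q \<le> 1" using q by (simp_all add: one_le_power)
  define \<delta> where "\<delta> = min (1 / ?Q) (\<eta> / (2 * (real s + 1)))"
  have \<delta>: "0 < \<delta>" "\<delta> \<le> 1 / ?Q" using \<eta> Q by (simp_all add: \<delta>_def)
  have s\<delta>: "real s * \<delta> \<le> \<eta> / 2"
  proof -
    have "real s * \<delta> \<le> real s * (\<eta> / (2 * (real s + 1)))" unfolding \<delta>_def by (intro mult_left_mono) auto
    also have "\<dots> \<le> \<eta> / 2" using \<eta> by (simp add: field_simps)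
    finally show ?thesis .
  qed
  define \<alpha> where "\<alpha> i = real (w i) / ?Q + \<delta>" for i
  define \<beta> where "\<beta> i = (real (w i) + 1) / ?Q" for i
  have width: "\<beta> i - \<alpha> i = 1 / ?Q - \<delta>" for i unfolding \<alpha>_def \<beta>_def by (simp add: add_divide_distrib)
  have \<alpha>\<beta>: "0 \<le> \<alpha> i \<and> \<alpha> i \<le> \<beta> i \<and> \<beta> i \<le> 1" if "i \<in> {1..s}" for i
  proof -
    have "w i + 1 \<le> q ^ k" using w that by (auto simp: PiE_iff Suc_le_eq)
    then have "real (w i) + 1 \<le> ?Q" by (metis of_nat_1 of_nat_add of_nat_le_iff of_nat_power)
    then show ?thesis using width[of i] \<delta> Q unfolding \<alpha>_def \<beta>_def by simp
  qed
  have "1 / real q ^ (s * k) - real s * \<delta> \<le> (1 / ?Q - \<delta>) ^ s"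
    using power_minus_ge[of \<delta> "1 / ?Q" s] \<delta> Q by (simp add: power_mult power_divide mult.commute)
  then have volume: "1 / real q ^ (s * k) - \<eta> / 2 \<le> (\<Prod>i\<in>{1..s}. \<beta> i - \<alpha> i)"
    using s\<delta> by (simp add: width)
  have in_cell: "cell n = w" if "\<forall>i\<in>{1..s}. \<alpha> i \<le> x n i \<and> x n i < \<beta> i" for n
  proof (rule PiE_ext[OF cell w])
    fix i assume i: "i \<in> {1..s}"
    have "real (cell n i) / ?Q < (real (w i) + 1) / ?Q"
      and "real (w i) / ?Q < (real (cell n i) + 1) / ?Q"
      using cell_bounds[OF i, of n] that i \<delta> unfolding \<alpha>_def \<beta>_def by fastforce+
    then have "real (cell n i) < real (w i) + 1" and "real (w i) < real (cell n i) + 1"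
      using Q q by (simp_all add: divide_less_cancel)
    then show "cell n i = w i" by linarith
  qed
  have "rel_freq (\<lambda>n. \<forall>i\<in>{1..s}. \<alpha> i \<le> x n i \<and> x n i < \<beta> i) \<longlonglongrightarrow> (\<Prod>i\<in>{1..s}. \<beta> i - \<alpha> i)"
    by (rule box_freq_tendsto[OF _ anchored_box_freq_tendsto[OF ud] \<alpha>\<beta>]) simp_all
  from tendstoD[OF this half_gt_zero[OF \<eta>]]
  have "eventually (\<lambda>N. \<bar>rel_freq (\<lambda>n. \<forall>i\<in>{1..s}. \<alpha> i \<le> x n i \<and> x n i < \<beta> i) N -
      (\<Prod>i\<in>{1..s}. \<beta> i - \<alpha> i)\<bar> < \<eta> / 2) sequentially"
    by (simp add: dist_real_def)
  then show ?thesis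
  proof (rule eventually_mono)
    fix N assume "\<bar>rel_freq (\<lambda>n. \<forall>i\<in>{1..s}. \<alpha> i \<le> x n i \<and> x n i < \<beta> i) N -
      (\<Prod>i\<in>{1..s}. \<beta> i - \<alpha> i)\<bar> < \<eta> / 2"
    moreover have "rel_freq (\<lambda>n. \<forall>i\<in>{1..s}. \<alpha> i \<le> x n i \<and> x n i < \<beta> i) N \<le> rel_freq (\<lambda>n. cell n = w) N"
      using in_cell by (rule rel_freq_mono)
    ultimately show "1 / real q ^ (s * k) - \<eta> \<le> rel_freq (\<lambda>n. cell n = w) N"
      using volume by (simp only: abs_less_iff) linarith
  qed
qed

lemma unif_distr_iff_cells_equidistributed:
  fixes x :: "nat \<Rightarrow> nat \<Rightarrow> real" and cell :: "nat \<Rightarrow> nat \<Rightarrow> nat \<Rightarrow> nat"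
  assumes q: "1 < q"
    and cell: "\<And>k n. cell k n \<in> PiE {1..s} (\<lambda>_. {..<q ^ k})"
    and cell_bounds: "\<And>k n i. i \<in> {1..s} \<Longrightarrow>
      real (cell k n i) / real q ^ k \<le> x n i \<and> x n i \<le> (real (cell k n i) + 1) / real q ^ k"
  shows "unif_distr s x \<longleftrightarrow> (\<forall>k\<ge>1. equidistributed_on (cell k) (PiE {1..s} (\<lambda>_. {..<q ^ k})))"
proof
  assume ud: "unif_distr s x"
  show "\<forall>k\<ge>1. equidistributed_on (cell k) (PiE {1..s} (\<lambda>_. {..<q ^ k}))"
  proof (intro allI impI equidistributed_on_if_lower_bounds)
    fix k v and \<eta> :: real assume "v \<in> PiE {1..s} (\<lambda>_. {..<q ^ k})" and "0 < \<eta>"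
    with cell_freq_lower_bound[of q s x "cell k", OF _ ud cell cell_bounds] q
    show "eventually (\<lambda>N. 1 / real (card (PiE {1..s} (\<lambda>_. {..<q ^ k}))) - \<eta> \<le>
        rel_freq (\<lambda>n. cell k n = v) N) sequentially"
      unfolding card_cell_vectors by simp
  qed (simp add: finite_PiE, rule cell)
next
  assume equi: "\<forall>k\<ge>1. equidistributed_on (cell k) (PiE {1..s} (\<lambda>_. {..<q ^ k}))"
  show "unif_distr s x"
    using equi by (intro unif_distr_if_cells_equidistributed[OF q cell cell_bounds]) auto
qed

lemma one_less_CARD_field: "1 < CARD('a::{field,finite})"
proof -
  have "card {0::'a, 1} \<le> CARD('a)" by (rule card_mono) auto
  then show ?thesis by simp
qed

theorem theorem2:
  fixes C :: "nat \<Rightarrow> nat \<Rightarrow> nat \<Rightarrow> 'a::{field,finite}"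
    and s :: nat
    and sq :: "nat \<Rightarrow> nat \<Rightarrow> nat"
  assumes "s \<ge> 1"
    and "finite_row s C"
    and "optimal_row_lengths s C"
    and "\<exists>(\<psi>1 :: nat \<Rightarrow> nat \<Rightarrow> 'a) lam1. psi_bij CARD('a) \<psi>1 \<and> lambda_bij CARD('a) s lam1 \<and>
           (\<exists>r0. \<forall>r\<ge>r0. \<psi>1 r 0 = 0) \<and>
           is_Ts_sequence CARD('a) (\<lambda>_. 0) s
             (\<lambda>n. alg_point CARD('a) C \<psi>1 lam1 (qdigits CARD('a) n))
             (\<lambda>m n. alg_trunc CARD('a) C \<psi>1 lam1 m (qdigits CARD('a) n))"
    and "\<forall>n r. sq n r < CARD('a)"
  shows "\<forall>(\<psi> :: nat \<Rightarrow> nat \<Rightarrow> 'a) lam. psi_bij CARD('a) \<psi> \<and> lambda_bij CARD('a) s lam \<longrightarrow>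
           (unif_distr s (\<lambda>n. alg_point CARD('a) C \<psi> lam (sq n)) \<longleftrightarrow> qadic_ud CARD('a) sq)"
proof (intro allI impI)
  let ?q = "CARD('a)"
  fix \<psi> :: "nat \<Rightarrow> nat \<Rightarrow> 'a" and lam :: "nat \<Rightarrow> nat \<Rightarrow> 'a \<Rightarrow> nat"
  assume "psi_bij ?q \<psi> \<and> lambda_bij ?q s lam"
  then have \<psi>: "psi_bij ?q \<psi>" and lam: "lambda_bij ?q s lam" by auto
  have q: "1 < ?q" and s: "1 \<le> s" and opt: "optimal_row_lengths s C" and digits: "\<And>n r. sq n r < ?q"
    using one_less_CARD_field assms by auto
  then have q0: "0 < ?q" by simp
  obtain \<psi>1 :: "nat \<Rightarrow> nat \<Rightarrow> 'a" and lam1 where \<psi>1: "psi_bij ?q \<psi>1" and lam1: "lambda_bij ?q s lam1"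
    and net: "is_Ts_sequence ?q (\<lambda>_. 0) s (\<lambda>n. alg_point ?q C \<psi>1 lam1 (qdigits ?q n))
      (\<lambda>m n. alg_trunc ?q C \<psi>1 lam1 m (qdigits ?q n))"
    using assms(4) by blast
  have "unif_distr s (\<lambda>n. alg_point ?q C \<psi> lam (sq n)) \<longleftrightarrow>
      (\<forall>k\<ge>1. equidistributed_on (\<lambda>n. alg_cell ?q s k C \<psi> lam (sq n)) (PiE {1..s} (\<lambda>_. {..<?q ^ k})))"
    using alg_cell_in_PiE[OF q0 lam] alg_point_cell_bounds[OF q0 lam]
    by (intro unif_distr_iff_cells_equidistributed[OF q]) simp_all
  also have "\<dots> \<longleftrightarrow> (\<forall>k\<ge>1. equidistributed_on (\<lambda>n. qadic_trunc ?q (s * k) (sq n)) {..<?q ^ (s * k)})"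
    using alg_cells_equidistributed_iff_truncations[OF q0 s _ opt \<psi> lam \<psi>1 lam1 net digits] by simp
  also have "\<dots> \<longleftrightarrow> qadic_ud ?q sq"
    by (rule qadic_ud_iff_equidistributed_truncations[OF q0 s digits, symmetric])
  finally show "unif_distr s (\<lambda>n. alg_point ?q C \<psi> lam (sq n)) \<longleftrightarrow> qadic_ud ?q sq" .
qed

end
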